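(* Let $\mathbb{K}$ be an algebraically closed field with $\operatorname{char}(\mathbb{K})\neq 2$. Let \[ A=\frac{\mathbb{K}\langle x_1,x_2,x_3,x_4\rangle}{\langle g_1,\ldots,g_6\rangle}, \] where \[ g_1=x_1x_2-x_2x_1,\quad g_2=x_2x_3-x_3x_2,\quad g_3=x_1x_3-x_3x_1,\quad g_4=x_1x_4-x_4x_1, \] \[ g_5=x_2x_4-x_4x_2,\quad g_6=x_3x_4-x_4x_3-x_1^2+x_2x_3. \] Then the point scheme of $A$ is $\mathcal{V}\big(x_1(x_1^2-x_2x_3),\,x_2(x_1^2-x_2x_3)\big)\subset\mathbb{P}^3$, which contains the double line $\mathcal{V}(x_1,x_2)$.
   Context: Point scheme: for a quadratic algebra $A=\mathbb{K}\langle x_1,\dots,x_4\rangle/\langle g_1,\dots,g_6\rangle$ with each $g_i=\sum_{j,k}c_{ijk}x_jx_k$ homogeneous of degree 2, let $D$ be the $6\times 4$ matrix with entries $D_{ik}=\sum_j c_{ijk}x_j$ (linear forms in $x_1,\dots,x_4$), so that $g_i(\alpha,\beta):=\sum_{j,k}c_{ijk}\alpha_j\beta_k=(D(\alpha)\beta)_i$ for $(\alpha,\beta)\in\mathbb{P}^3\times\mathbb{P}^3$. The point scheme of $A$ is the subscheme of $\mathbb{P}^3$ (homogeneous coordinates $x_1,\dots,x_4$) defined by the vanishing of all $4\times 4$ minors of $D$; its points are the $\alpha\in\mathbb{P}^3$ for which there exists $\beta\in\mathbb{P}^3$ with $g_i(\alpha,\beta)=0$ for all $i$. For homogeneous polynomials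 $f_1,\dots,f_r$, $\mathcal{V}(f_1,\dots,f_r)$ denotes their zero locus (subscheme) in $\mathbb{P}^3$. *)

theory Defs
  imports "HOL-Library.Poly_Mapping" "HOL-Computational_Algebra.Polynomial"
          "HOL-Combinatorics.Permutations"
begin

text \<open>Commutative polynomials over 'k: finitely supported maps from monomials
  (exponent vectors, variable x_i has index i, i = 1..4) to coefficients.\<close>
type_synonym 'k mpoly = "(nat \<Rightarrow>\<^sub>0 nat) \<Rightarrow>\<^sub>0 'k"

definition Var :: "nat \<Rightarrow> 'k::comm_ring_1 mpoly" where
  "Var i = Poly_Mapping.single (Poly_Mapping.single i 1) 1"

definition Const :: "'k::comm_ring_1 \<Rightarrow> 'k mpoly" where
  "Const a = Poly_Mapping.single 0 a"

inductive_set gen_ideal :: "'a::comm_ring_1 set \<Rightarrow> 'a set" for S where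
  zero: "0 \<in> gen_ideal S"
| gen: "s \<in> S \<Longrightarrow> s \<in> gen_ideal S"
| add: "p \<in> gen_ideal S \<Longrightarrow> q \<in> gen_ideal S \<Longrightarrow> p + q \<in> gen_ideal S"
| mult: "p \<in> gen_ideal S \<Longrightarrow> r * p \<in> gen_ideal S"

text \<open>Two homogeneous
  ideals define the same closed subscheme of P^3 iff their saturations coincide;
  the subscheme V(I) contains V(J) iff sat I \<subseteq> sat J.\<close>
definition saturation :: "'k::comm_ring_1 mpoly set \<Rightarrow> 'k mpoly set" where
  "saturation I = {f. \<exists>N. \<forall>i\<in>{1..4}. Var i ^ N * f \<in> I}"

definition same_subscheme :: "'k::comm_ring_1 mpoly set \<Rightarrow> 'k mpoly set \<Rightarrow> bool" where
  "same_subscheme I J \<longleftrightarrow> saturation I = saturation J"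

definition subscheme_of :: "'k::comm_ring_1 mpoly set \<Rightarrow> 'k mpoly set \<Rightarrow> bool" where
  "subscheme_of J I \<longleftrightarrow> saturation I \<subseteq> saturation J"

text \<open>The relations are g_i = \<Sum>_{j,k} c i j k x_j x_k (i = 1..6, j,k = 1..4).
  D is the 6x4 matrix of linear forms D_ik = \<Sum>_j c i j k x_j.\<close>
definition Dmat :: "(nat \<Rightarrow> nat \<Rightarrow> nat \<Rightarrow> 'k::comm_ring_1) \<Rightarrow> nat \<Rightarrow> nat \<Rightarrow> 'k mpoly" where
  "Dmat c i k = (\<Sum>j\<in>{1..4}. Const (c i j k) * Var j)"

definition det4 :: "(nat \<Rightarrow> nat \<Rightarrow> 'a::comm_ring_1) \<Rightarrow> 'a" where
  "det4 M = (\<Sum>p | p permutes {1..4}. of_int (sign p) * (\<Prod>a\<in>{1..4}. M a (p a)))"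

definition minors4 :: "(nat \<Rightarrow> nat \<Rightarrow> nat \<Rightarrow> 'k::comm_ring_1) \<Rightarrow> 'k mpoly set" where
  "minors4 c = {det4 (\<lambda>a b. Dmat c (r a) b) | r.
      1 \<le> r 1 \<and> r 1 < r 2 \<and> r 2 < r 3 \<and> r 3 < r 4 \<and> r 4 \<le> 6}"

definition point_scheme_ideal :: "(nat \<Rightarrow> nat \<Rightarrow> nat \<Rightarrow> 'k::comm_ring_1) \<Rightarrow> 'k mpoly set" where
  "point_scheme_ideal c = gen_ideal (minors4 c)"

definition cA :: "nat \<Rightarrow> nat \<Rightarrow> nat \<Rightarrow> 'k::comm_ring_1" where
  "cA i j k =
    (if (i,j,k) = (1,1,2) then 1 else if (i,j,k) = (1,2,1) then -1
     else if (i,j,k) = (2,2,3) then 1 else if (i,j,k) = (2,3,2) then -1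
     else if (i,j,k) = (3,1,3) then 1 else if (i,j,k) = (3,3,1) then -1
     else if (i,j,k) = (4,1,4) then 1 else if (i,j,k) = (4,4,1) then -1
     else if (i,j,k) = (5,2,4) then 1 else if (i,j,k) = (5,4,2) then -1
     else if (i,j,k) = (6,3,4) then 1 else if (i,j,k) = (6,4,3) then -1
     else if (i,j,k) = (6,1,1) then -1 else if (i,j,k) = (6,2,3) then 1
     else 0)"

end

theory Submission
  imports Defs
begin

text \<open>Every 4 x 4 minor of D is, up to sign, zero or one of the products x_j x_i F with
  i \<in> {1, 2}, j \<in> {1, ..., 4} and F = x_1^2 - x_2 x_3; conversely each such product is a
  minor. Hence the ideal of minors lies in J = (x_1 F, x_2 F) and contains (x_1, ..., x_4) J,
  so both have the same saturation. The double line V(x_1^2, x_1 x_2, x_2^2) lies in V(J)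
  simply because J is contained in (x_1^2, x_1 x_2, x_2^2). None of this uses that the field is
  algebraically closed or that 2 \<noteq> 0.\<close>

lemma gen_ideal_subset:
  assumes "S \<subseteq> gen_ideal T"
  shows "gen_ideal S \<subseteq> gen_ideal T"
proof
  fix p assume "p \<in> gen_ideal S"
  then show "p \<in> gen_ideal T"
    by (induction p rule: gen_ideal.induct) (use assms in \<open>auto intro: gen_ideal.intros\<close>)
qed

lemma gen_ideal_mult_gen: "s \<in> S \<Longrightarrow> r * s \<in> gen_ideal S"
  by (intro gen_ideal.mult gen_ideal.gen)

lemma gen_ideal_uminus: "p \<in> gen_ideal S \<Longrightarrow> - p \<in> gen_ideal (S :: 'a::comm_ring_1 set)"
  using gen_ideal.mult[of p S "-1"] by simp

lemma gen_ideal_diff: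
  "p \<in> gen_ideal S \<Longrightarrow> q \<in> gen_ideal S \<Longrightarrow> p - q \<in> gen_ideal (S :: 'a::comm_ring_1 set)"
  using gen_ideal.add[OF _ gen_ideal_uminus] by fastforce

lemma gen_ideal_mult_left:
  assumes "\<And>s. s \<in> S \<Longrightarrow> a * s \<in> gen_ideal T"
    and "p \<in> gen_ideal (S :: 'a::comm_ring_1 set)"
  shows "a * p \<in> gen_ideal T"
  using assms(2)
proof (induction p rule: gen_ideal.induct)
  case zero
  show ?case by (simp add: gen_ideal.zero)
next
  case (gen s)
  then show ?case by (rule assms(1))
next
  case (add p q)
  then show ?case by (simp add: distrib_left gen_ideal.add)
next
  case (mult p r)
  then show ?case by (metis gen_ideal.mult mult.left_commute)
qed

lemma saturation_mono: "I \<subseteq> J \<Longrightarrow> saturation I \<subseteq> saturation J"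
  unfolding saturation_def by blast

lemma saturation_subset_if_Var_mult:
  assumes "\<And>i q. i \<in> {1..4} \<Longrightarrow> q \<in> J \<Longrightarrow> Var i * q \<in> I"
  shows "saturation J \<subseteq> saturation I"
proof
  fix p assume "p \<in> saturation J"
  then obtain N where "\<forall>i\<in>{1..4}. Var i ^ N * p \<in> J"
    unfolding saturation_def by blast
  then have "\<forall>i\<in>{1..4}. Var i ^ Suc N * p \<in> I"
    using assms by (simp add: mult.assoc)
  then show "p \<in> saturation I"
    unfolding saturation_def by blast
qed

lemma det4_expand:
  "det4 (M :: nat \<Rightarrow> nat \<Rightarrow> 'a::comm_ring_1) =
    M 1 1 * M 2 2 * M 3 3 * M 4 4 - M 1 1 * M 2 2 * M 3 4 * M 4 3 - M 1 1 * M 2 3 * M 3 2 * M 4 4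
    + M 1 1 * M 2 3 * M 3 4 * M 4 2 + M 1 1 * M 2 4 * M 3 2 * M 4 3 - M 1 1 * M 2 4 * M 3 3 * M 4 2
    - M 1 2 * M 2 1 * M 3 3 * M 4 4 + M 1 2 * M 2 1 * M 3 4 * M 4 3 + M 1 2 * M 2 3 * M 3 1 * M 4 4
    - M 1 2 * M 2 3 * M 3 4 * M 4 1 - M 1 2 * M 2 4 * M 3 1 * M 4 3 + M 1 2 * M 2 4 * M 3 3 * M 4 1
    + M 1 3 * M 2 1 * M 3 2 * M 4 4 - M 1 3 * M 2 1 * M 3 4 * M 4 2 - M 1 3 * M 2 2 * M 3 1 * M 4 4
    + M 1 3 * M 2 2 * M 3 4 * M 4 1 + M 1 3 * M 2 4 * M 3 1 * M 4 2 - M 1 3 * M 2 4 * M 3 2 * M 4 1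
    - M 1 4 * M 2 1 * M 3 2 * M 4 3 + M 1 4 * M 2 1 * M 3 3 * M 4 2 + M 1 4 * M 2 2 * M 3 1 * M 4 3
    - M 1 4 * M 2 2 * M 3 3 * M 4 1 - M 1 4 * M 2 3 * M 3 1 * M 4 2 + M 1 4 * M 2 3 * M 3 2 * M 4 1"
proof -
  have "{1..4::nat} = {1, 2, 3, 4}" by auto
  then show ?thesis
    unfolding det4_def
    by (simp add: sum_over_permutations_insert sign_compose permutation_compose
          permutation_swap_id sign_swap_id transpose_def algebra_simps)
qed

definition rows4 :: "nat \<Rightarrow> nat \<Rightarrow> nat \<Rightarrow> nat \<Rightarrow> nat \<Rightarrow> nat" where
  "rows4 r1 r2 r3 r4 = (\<lambda>_. r4)(1 := r1, 2 := r2, 3 := r3)"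

definition minor4 ::
    "(nat \<Rightarrow> nat \<Rightarrow> nat \<Rightarrow> 'k::comm_ring_1) \<Rightarrow> nat \<Rightarrow> nat \<Rightarrow> nat \<Rightarrow> nat \<Rightarrow> 'k mpoly" where
  "minor4 c r1 r2 r3 r4 = det4 (\<lambda>x y. Dmat c (rows4 r1 r2 r3 r4 x) y)"

lemma row_choices_4_of_6:
  "{(a, b, c, d). 1 \<le> a \<and> a < b \<and> b < c \<and> c < d \<and> d \<le> (6::nat)} =
    {(1,2,3,4), (1,2,3,5), (1,2,3,6), (1,2,4,5), (1,2,4,6), (1,2,5,6), (1,3,4,5), (1,3,4,6),
     (1,3,5,6), (1,4,5,6), (2,3,4,5), (2,3,4,6), (2,3,5,6), (2,4,5,6), (3,4,5,6)}"
  (is "?choices = ?list")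
proof
  show "?choices \<subseteq> ?list"
  proof
    fix t assume "t \<in> ?choices"
    then obtain a b c d where t: "t = (a, b, c, d)"
      and abcd: "1 \<le> a" "a < b" "b < c" "c < d" "d \<le> 6"
      by auto
    then have "a = 1 \<or> a = 2 \<or> a = 3" "b = 2 \<or> b = 3 \<or> b = 4"
      "c = 3 \<or> c = 4 \<or> c = 5" "d = 4 \<or> d = 5 \<or> d = 6"
      by linarith+
    then show "t \<in> ?list"
      unfolding t using abcd by (elim disjE) simp_all
  qed
qed auto

lemma minors4_eq_image:
  "minors4 c = (\<lambda>(r1, r2, r3, r4). minor4 c r1 r2 r3 r4) `
     {(r1, r2, r3, r4). 1 \<le> r1 \<and> r1 < r2 \<and> r2 < r3 \<and> r3 < r4 \<and> r4 \<le> 6}"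
  (is "_ = ?minor ` ?choices")
proof -
  have minor: "det4 (\<lambda>x y. Dmat c (r x) y) = minor4 c (r 1) (r 2) (r 3) (r 4)" for r
    unfolding minor4_def det4_expand rows4_def by simp
  show ?thesis
    unfolding minors4_def
  proof
    show "{det4 (\<lambda>x y. Dmat c (r x) y) | r.
        1 \<le> r 1 \<and> r 1 < r 2 \<and> r 2 < r 3 \<and> r 3 < r 4 \<and> r 4 \<le> 6}
      \<subseteq> ?minor ` ?choices"
      unfolding minor by (auto intro!: image_eqI)
    show "?minor ` ?choices \<subseteq> {det4 (\<lambda>x y. Dmat c (r x) y) | r.
        1 \<le> r 1 \<and> r 1 < r 2 \<and> r 2 < r 3 \<and> r 3 < r 4 \<and> r 4 \<le> 6}"
      by (fastforce simp: minor4_def rows4_def)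
  qed
qed

lemma Dmat_cA:
  "Dmat cA 1 1 = - Var 2" "Dmat cA 1 2 = Var 1" "Dmat cA 1 3 = 0" "Dmat cA 1 4 = 0"
  "Dmat cA 2 1 = 0" "Dmat cA 2 2 = - Var 3" "Dmat cA 2 3 = Var 2" "Dmat cA 2 4 = 0"
  "Dmat cA 3 1 = - Var 3" "Dmat cA 3 2 = 0" "Dmat cA 3 3 = Var 1" "Dmat cA 3 4 = 0"
  "Dmat cA 4 1 = - Var 4" "Dmat cA 4 2 = 0" "Dmat cA 4 3 = 0" "Dmat cA 4 4 = Var 1"
  "Dmat cA 5 1 = 0" "Dmat cA 5 2 = - Var 4" "Dmat cA 5 3 = 0" "Dmat cA 5 4 = Var 2"
  "Dmat cA 6 1 = - Var 1" "Dmat cA 6 2 = 0" "Dmat cA 6 3 = Var 2 - Var 4"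
  "Dmat (cA :: nat \<Rightarrow> nat \<Rightarrow> nat \<Rightarrow> 'k::comm_ring_1) 6 4 = Var 3"
  by (simp_all add: Dmat_def cA_def Const_def single_uminus eval_nat_numeral)

abbreviation conic :: "'k::comm_ring_1 mpoly" where
  "conic \<equiv> Var 1 ^ 2 - Var 2 * Var 3"

lemma minors4_cA:
  "minors4 (cA :: nat \<Rightarrow> nat \<Rightarrow> nat \<Rightarrow> 'k::comm_ring_1) =
    {0, Var 1 * (Var 1 * conic), Var 2 * (Var 1 * conic), Var 2 * (Var 2 * conic),
     - (Var 3 * (Var 1 * conic)), - (Var 3 * (Var 2 * conic)),
     - (Var 4 * (Var 1 * conic)), - (Var 4 * (Var 2 * conic))}"
proof -
  have minor_values:
    "minor4 (cA :: nat \<Rightarrow> nat \<Rightarrow> nat \<Rightarrow> 'k) 1 2 3 4 = 0"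
    "minor4 cA 1 2 3 5 = 0"
    "minor4 cA 1 2 3 6 = 0"
    "minor4 cA 1 2 4 5 = 0"
    "minor4 cA 1 2 4 6 = Var 2 * (Var 1 * conic)"
    "minor4 cA 1 2 5 6 = Var 2 * (Var 2 * conic)"
    "minor4 cA 1 3 4 5 = 0"
    "minor4 cA 1 3 4 6 = Var 1 * (Var 1 * conic)"
    "minor4 cA 1 3 5 6 = Var 2 * (Var 1 * conic)"
    "minor4 cA 1 4 5 6 = 0"
    "minor4 cA 2 3 4 5 = 0"
    "minor4 cA 2 3 4 6 = - (Var 3 * (Var 1 * conic))"
    "minor4 cA 2 3 5 6 = - (Var 3 * (Var 2 * conic))"
    "minor4 cA 2 4 5 6 = - (Var 4 * (Var 2 * conic))"
    "minor4 cA 3 4 5 6 = - (Var 4 * (Var 1 * conic))"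
    unfolding minor4_def det4_expand rows4_def
    by (simp_all add: Dmat_cA Dmat_cA[simplified] algebra_simps power2_eq_square)
  show ?thesis
    unfolding minors4_eq_image row_choices_4_of_6
    by (simp only: image_insert image_empty prod.case minor_values) auto
qed

lemma point_scheme_ideal_cA_subset:
  "point_scheme_ideal (cA :: nat \<Rightarrow> nat \<Rightarrow> nat \<Rightarrow> 'k::comm_ring_1)
     \<subseteq> gen_ideal {Var 1 * conic, Var 2 * conic}"
  unfolding point_scheme_ideal_def minors4_cA
  by (rule gen_ideal_subset)
    (auto intro: gen_ideal.zero gen_ideal_mult_gen gen_ideal_uminus)

lemma Var_mult_conic_ideal_subset_point_scheme_ideal:
  assumes "i \<in> {1..4}" and "q \<in> gen_ideal {Var 1 * conic, Var 2 * conic}"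
  shows "Var i * q \<in> point_scheme_ideal (cA :: nat \<Rightarrow> nat \<Rightarrow> nat \<Rightarrow> 'k::comm_ring_1)"
  unfolding point_scheme_ideal_def using _ assms(2)
proof (rule gen_ideal_mult_left)
  fix s :: "'k mpoly" assume "s \<in> {Var 1 * conic, Var 2 * conic}"
  moreover have "i = 1 \<or> i = 2 \<or> i = 3 \<or> i = 4"
    using assms(1) by auto
  ultimately have "Var i * s \<in> minors4 cA \<or> - (Var i * s) \<in> minors4 cA"
    unfolding minors4_cA by (elim insertE disjE) (simp_all add: mult.left_commute[of "Var 1" "Var 2"])
  then show "Var i * s \<in> gen_ideal (minors4 cA)"
    by (metis gen_ideal.gen gen_ideal_uminus minus_minus)
qed

lemma conic_generators_subset_double_line:
  "gen_ideal {Var 1 * conic, Var 2 * conic}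
     \<subseteq> gen_ideal {Var 1 ^ 2, Var 1 * Var 2, Var 2 ^ 2 :: 'k::comm_ring_1 mpoly}"
proof (rule gen_ideal_subset)
  have "Var 1 * conic = Var 1 * Var 1 ^ 2 - Var 3 * (Var 1 * Var 2 :: 'k mpoly)"
    "Var 2 * conic = Var 1 * (Var 1 * Var 2) - Var 3 * (Var 2 ^ 2 :: 'k mpoly)"
    by (simp_all add: algebra_simps power2_eq_square)
  then show "{Var 1 * conic, Var 2 * conic}
      \<subseteq> gen_ideal {Var 1 ^ 2, Var 1 * Var 2, Var 2 ^ 2 :: 'k mpoly}"
    by (auto intro!: gen_ideal_diff gen_ideal_mult_gen)
qed

theorem proposition6:
  assumes "(2::'k::alg_closed_field) \<noteq> 0"
  shows "same_subscheme (point_scheme_ideal (cA :: nat \<Rightarrow> nat \<Rightarrow> nat \<Rightarrow> 'k))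
           (gen_ideal {Var 1 * (Var 1 ^ 2 - Var 2 * Var 3),
                       Var 2 * (Var 1 ^ 2 - Var 2 * Var 3)})
       \<and> subscheme_of (gen_ideal {Var 1 ^ 2, Var 1 * Var 2, Var 2 ^ 2})
           (gen_ideal {Var 1 * (Var 1 ^ 2 - Var 2 * Var 3),
                       Var 2 * (Var 1 ^ 2 - Var 2 * Var 3) :: 'k mpoly})"
proof -
  let ?I = "point_scheme_ideal (cA :: nat \<Rightarrow> nat \<Rightarrow> nat \<Rightarrow> 'k)"
  let ?J = "gen_ideal {Var 1 * conic, Var 2 * conic :: 'k mpoly}"
  have "saturation ?I \<subseteq> saturation ?J"
    by (rule saturation_mono[OF point_scheme_ideal_cA_subset])
  moreover have "saturation ?J \<subseteq> saturation ?I"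
    using Var_mult_conic_ideal_subset_point_scheme_ideal by (rule saturation_subset_if_Var_mult)
  moreover have "saturation ?J \<subseteq> saturation (gen_ideal {Var 1 ^ 2, Var 1 * Var 2, Var 2 ^ 2})"
    by (rule saturation_mono[OF conic_generators_subset_double_line])
  ultimately show ?thesis
    unfolding same_subscheme_def subscheme_of_def by blast
qed

end
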